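(* Consider the Wiener system $$x_{k+1}=Ax_k+Bu_k,\qquad y_k=\phi(Cx_k+Du_k),$$ with $A\in\mathbb{R}^{n\times n}$, $B\in\mathbb{R}^{n\times m}$, $C\in\mathbb{R}^{1\times n}$, $D\in\mathbb{R}^{1\times m}$, where $(A,B)$ is controllable and $(A,C)$ is observable, and $\phi:\mathbb{R}\to\mathbb{R}^p$ is a bijection whose inverse satisfies $\phi^{-1}(y)=\sum_{i=1}^q b_i\tilde\phi_i(y)$ for all $y\in\mathbb{R}^p$, for known functions $\tilde\phi_i:\mathbb{R}^p\to\mathbb{R}$ and real coefficients $b_i$. Suppose $\{u_k,y_k\}_{k=0}^{N-1}$ is a trajectory of this system and $u$ is persistently exciting of order $L+n$. Define $z_k=(\tilde\phi_1(y_k),\dots,\tilde\phi_q(y_k))^\top$ for $k=0,\dots,N-1$. Let $\{\bar u_k,\bar y_k\}_{k=0}^{L-1}$ be an input-output sequence and define $\bar z_k=(\tilde\phi_1(\bar y_k),\dots,\tilde\phi_q(\bar y_k))^\top$. If there exists $\alpha\in\mathbb{R}^{N-L+1}$ such that $$\begin{bmatrix}H_L(u)\\ H_L(z)\end{bmatrix}\alpha=\begin{bmatrix}\bar u_{[0,L-1]}\\ \bar z_{[0,L-1]}\end{bmatrix},$$ then $\{\bar u_k,\bar y_k\}_{k=0}^{L-1}$ is a trajectory of the Wiener system.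
   Context: For a sequence $\{x_k\}_{k=0}^{N-1}$ with $x_k\in\mathbb{R}^d$ and $1\le L\le N$, the Hankel matrix $H_L(x)\in\mathbb{R}^{dL\times(N-L+1)}$ has $(i,j)$ block $x_{i+j}$ ($i=0,\dots,L-1$, $j=0,\dots,N-L$); $x_{[a,b]}$ is the stacked vector $(x_a^\top,\dots,x_b^\top)^\top$. The sequence is persistently exciting of order $L$ if $\operatorname{rank}H_L(x)=dL$. An input-output sequence $\{u_k,y_k\}_{k=0}^{N-1}$ is a trajectory of the Wiener system if there exist an initial state $\bar x\in\mathbb{R}^n$ and states $\{x_k\}_{k=0}^{N}$ with $x_0=\bar x$ satisfying the system equations for $k=0,\dots,N-1$. *)

theory Defs
  imports "Jordan_Normal_Form.DL_Rank"
begin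

definition mat_rank :: "real mat \<Rightarrow> nat" where
  "mat_rank M = vec_space.rank (dim_row M) M"

text \<open>Controllability matrix [B, AB, ..., A^(n-1) B] (n = dim_row A).\<close>
definition ctrb_mat :: "real mat \<Rightarrow> real mat \<Rightarrow> real mat" where
  "ctrb_mat A B = mat (dim_row A) (dim_row A * dim_col B)
     (\<lambda>(i,j). ((A ^\<^sub>m (j div dim_col B)) * B) $$ (i, j mod dim_col B))"

text \<open>Observability matrix [C; CA; ...; C A^(n-1)] (n = dim_row A).\<close>
definition obsv_mat :: "real mat \<Rightarrow> real mat \<Rightarrow> real mat" where
  "obsv_mat A C = mat (dim_row A * dim_row C) (dim_row A)
     (\<lambda>(i,j). (C * (A ^\<^sub>m (i div dim_row C))) $$ (i mod dim_row C, j))"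

definition controllable :: "real mat \<Rightarrow> real mat \<Rightarrow> bool" where
  "controllable A B \<longleftrightarrow> mat_rank (ctrb_mat A B) = dim_row A"

definition observable :: "real mat \<Rightarrow> real mat \<Rightarrow> bool" where
  "observable A C \<longleftrightarrow> mat_rank (obsv_mat A C) = dim_row A"

text \<open>Hankel matrix H_L(x) in R^{dL x (N-L+1)} of a sequence x_0..x_{N-1} in R^d:
  block (i,j) is x_{i+j}.\<close>
definition hankel :: "nat \<Rightarrow> nat \<Rightarrow> nat \<Rightarrow> (nat \<Rightarrow> real vec) \<Rightarrow> real mat" where
  "hankel d L N x = mat (d * L) (N - L + 1) (\<lambda>(i,j). x (i div d + j) $ (i mod d))"

definition stack :: "nat \<Rightarrow> nat \<Rightarrow> (nat \<Rightarrow> real vec) \<Rightarrow> real vec" where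
  "stack d L x = vec (d * L) (\<lambda>i. x (i div d) $ (i mod d))"

definition persistently_exciting :: "nat \<Rightarrow> nat \<Rightarrow> nat \<Rightarrow> (nat \<Rightarrow> real vec) \<Rightarrow> bool" where
  "persistently_exciting d L N x \<longleftrightarrow> mat_rank (hankel d L N x) = d * L"

text \<open>{u_k,y_k}_{k=0}^{N-1} is a trajectory of x_{k+1} = A x_k + B u_k, y_k = phi(C x_k + D u_k)
  (C, D have one row, so C x_k + D u_k is a scalar).\<close>
definition wiener_traj ::
  "real mat \<Rightarrow> real mat \<Rightarrow> real mat \<Rightarrow> real mat \<Rightarrow> (real \<Rightarrow> real vec) \<Rightarrow> nat
     \<Rightarrow> (nat \<Rightarrow> real vec) \<Rightarrow> (nat \<Rightarrow> real vec) \<Rightarrow> bool" where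
  "wiener_traj A B C D \<phi> N u y \<longleftrightarrow>
     (\<exists>xbar \<in> carrier_vec (dim_row A). \<exists>x :: nat \<Rightarrow> real vec.
        x 0 = xbar \<and> (\<forall>k\<le>N. x k \<in> carrier_vec (dim_row A)) \<and>
        (\<forall>k<N. x (Suc k) = A *\<^sub>v x k + B *\<^sub>v u k \<and>
               y k = \<phi> ((C *\<^sub>v x k + D *\<^sub>v u k) $ 0)))"

end

theory Submission
  imports Defs
begin

text \<open>Only the easy direction of the data-driven characterisation is needed. Each Hankel column is a length-L window
  of the measured trajectory, i.e. an input/state/linear-output trajectory of the linear part. By
  linearity, the \<alpha>-combination of these windows is again one, with the combined input ubar. Since
  \<phi>\<inverse> is linear in the features \<phi>t, the feature rows of the data equation say that \<phi>\<inverse>(ybar) is the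
  same combination of the measured linear outputs, so ybar = \<phi> of the combined linear output.\<close>

definition vec_lincomb :: "nat \<Rightarrow> ('j \<Rightarrow> 'a :: comm_semiring_0) \<Rightarrow> 'j set \<Rightarrow> ('j \<Rightarrow> 'a vec) \<Rightarrow> 'a vec"
  where
  "vec_lincomb n c J v = vec n (\<lambda>i. \<Sum>j\<in>J. c j * v j $ i)"

lemma vec_lincomb_carrier [simp]: "vec_lincomb n c J v \<in> carrier_vec n"
  and dim_vec_lincomb [simp]: "dim_vec (vec_lincomb n c J v) = n"
  and index_vec_lincomb [simp]: "i < n \<Longrightarrow> vec_lincomb n c J v $ i = (\<Sum>j\<in>J. c j * v j $ i)"
  by (simp_all add: vec_lincomb_def)

lemma vec_lincomb_cong:
  "(\<And>j. j \<in> J \<Longrightarrow> v j = w j) \<Longrightarrow> vec_lincomb n c J v = vec_lincomb n c J w"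
  by (simp add: vec_lincomb_def)

lemma mult_mat_vec_lincomb:
  assumes "A \<in> carrier_mat r n" and "\<forall>j\<in>J. v j \<in> carrier_vec n"
  shows "A *\<^sub>v vec_lincomb n c J v = vec_lincomb r c J (\<lambda>j. A *\<^sub>v v j)"
proof (rule eq_vecI)
  fix i assume "i < dim_vec (vec_lincomb r c J (\<lambda>j. A *\<^sub>v v j))"
  then have i: "i < r" by simp
  have "(A *\<^sub>v vec_lincomb n c J v) $ i = (\<Sum>l<n. A $$ (i, l) * (\<Sum>j\<in>J. c j * v j $ l))"
    using assms(1) i by (simp add: scalar_prod_def atLeast0LessThan)
  also have "\<dots> = (\<Sum>j\<in>J. c j * (\<Sum>l<n. A $$ (i, l) * v j $ l))"
    by (simp add: sum_distrib_left sum.swap[of _ J] algebra_simps)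
  also have "\<dots> = vec_lincomb r c J (\<lambda>j. A *\<^sub>v v j) $ i"
    using assms i by (auto simp: scalar_prod_def atLeast0LessThan intro!: sum.cong)
  finally show "(A *\<^sub>v vec_lincomb n c J v) $ i = vec_lincomb r c J (\<lambda>j. A *\<^sub>v v j) $ i" .
qed (use assms in auto)

lemma vec_lincomb_add:
  assumes "\<forall>j\<in>J. v j \<in> carrier_vec n" and "\<forall>j\<in>J. w j \<in> carrier_vec n"
  shows "vec_lincomb n c J (\<lambda>j. v j + w j) = vec_lincomb n c J v + vec_lincomb n c J w"
proof (rule eq_vecI)
  fix i assume "i < dim_vec (vec_lincomb n c J v + vec_lincomb n c J w)"
  then have i: "i < n" by simp
  have "vec_lincomb n c J (\<lambda>j. v j + w j) $ i = (\<Sum>j\<in>J. c j * v j $ i + c j * w j $ i)"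
    unfolding index_vec_lincomb[OF i] using assms i by (intro sum.cong) (auto simp: distrib_left)
  also have "\<dots> = (vec_lincomb n c J v + vec_lincomb n c J w) $ i"
    using i by (simp add: sum.distrib)
  finally show "vec_lincomb n c J (\<lambda>j. v j + w j) $ i = (vec_lincomb n c J v + vec_lincomb n c J w) $ i" .
qed simp

lemma vec_lincomb_affine_map:
  assumes "A \<in> carrier_mat r n" "B \<in> carrier_mat r m"
    and "\<forall>j\<in>J. v j \<in> carrier_vec n" "\<forall>j\<in>J. w j \<in> carrier_vec m"
  shows "vec_lincomb r c J (\<lambda>j. A *\<^sub>v v j + B *\<^sub>v w j)
         = A *\<^sub>v vec_lincomb n c J v + B *\<^sub>v vec_lincomb m c J w"
  using assms by (simp add: vec_lincomb_add mult_mat_vec_lincomb)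

lemma hankel_carrier [simp]: "hankel d L N x \<in> carrier_mat (d * L) (N - L + 1)"
  by (simp add: hankel_def)

lemma stack_carrier [simp]: "stack d L x \<in> carrier_vec (d * L)"
  by (simp add: stack_def)

lemma hankel_mult_vec_eq_stackD:
  assumes eq: "hankel d L N x *\<^sub>v a = stack d L w" and a: "a \<in> carrier_vec (N - L + 1)"
    and k: "k < L" and w: "w k \<in> carrier_vec d"
  shows "w k = vec_lincomb d (\<lambda>j. a $ j) {..<N - L + 1} (\<lambda>j. x (k + j))"
proof (rule eq_vecI)
  fix c assume "c < dim_vec (vec_lincomb d (\<lambda>j. a $ j) {..<N - L + 1} (\<lambda>j. x (k + j)))"
  then have c: "c < d" by simp
  have "k * d + c < Suc k * d" using c by simp
  also have "\<dots> \<le> d * L" using k by (metis Suc_leI mult.commute mult_le_mono1)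
  finally have i: "k * d + c < d * L" .
  have "w k $ c = stack d L w $ (k * d + c)" using i c by (simp add: stack_def)
  also have "\<dots> = (hankel d L N x *\<^sub>v a) $ (k * d + c)" using eq by simp
  also have "\<dots> = vec_lincomb d (\<lambda>j. a $ j) {..<N - L + 1} (\<lambda>j. x (k + j)) $ c"
    using i c a by (simp add: hankel_def vec_lincomb_def scalar_prod_def atLeast0LessThan mult.commute)
  finally show "w k $ c = vec_lincomb d (\<lambda>j. a $ j) {..<N - L + 1} (\<lambda>j. x (k + j)) $ c" .
qed (use w in auto)

lemma inv_into_eq_lincomb_of_features:
  fixes \<phi> :: "'a :: comm_semiring_0 \<Rightarrow> 'b"
  assumes phi_inv: "\<forall>w \<in> P. inv_into UNIV \<phi> w = (\<Sum>i<q. b i * \<phi>t i w)"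
    and "ybar \<in> P" and "\<forall>j\<in>J. y j \<in> P"
    and features: "\<forall>i<q. \<phi>t i ybar = (\<Sum>j\<in>J. c j * \<phi>t i (y j))"
  shows "inv_into UNIV \<phi> ybar = (\<Sum>j\<in>J. c j * inv_into UNIV \<phi> (y j))"
proof -
  have "inv_into UNIV \<phi> ybar = (\<Sum>i<q. b i * (\<Sum>j\<in>J. c j * \<phi>t i (y j)))"
    using assms by simp
  also have "\<dots> = (\<Sum>i<q. \<Sum>j\<in>J. c j * (b i * \<phi>t i (y j)))"
    by (simp add: sum_distrib_left mult.left_commute)
  also have "\<dots> = (\<Sum>j\<in>J. c j * (\<Sum>i<q. b i * \<phi>t i (y j)))"
    by (subst sum.swap) (simp add: sum_distrib_left)
  also have "\<dots> = (\<Sum>j\<in>J. c j * inv_into UNIV \<phi> (y j))"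
    using assms by (intro sum.cong) auto
  finally show ?thesis .
qed

lemma wiener_traj_lincomb_of_windows:
  assumes dims: "A \<in> carrier_mat n n" "B \<in> carrier_mat n m"
      "C \<in> carrier_mat 1 n" "D \<in> carrier_mat 1 m"
    and phi_bij: "bij_betw \<phi> UNIV (carrier_vec p)"
    and phi_inv: "\<forall>w \<in> carrier_vec p. inv_into UNIV \<phi> w = (\<Sum>i<q. b i * \<phi>t i w)"
    and windows: "M + L \<le> N + 1"
    and u_dim: "\<forall>k<N. u k \<in> carrier_vec m"
    and traj: "wiener_traj A B C D \<phi> N u y"
    and ybar_dim: "\<forall>k<L. ybar k \<in> carrier_vec p"
    and ubar: "\<forall>k<L. ubar k = vec_lincomb m c {..<M} (\<lambda>j. u (k + j))"
    and features: "\<forall>k<L. \<forall>i<q. \<phi>t i (ybar k) = (\<Sum>j<M. c j * \<phi>t i (y (k + j)))"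
  shows "wiener_traj A B C D \<phi> L ubar ybar"
proof -
  from traj obtain x where x_dim: "\<forall>k\<le>N. x k \<in> carrier_vec n"
    and step: "\<forall>k<N. x (Suc k) = A *\<^sub>v x k + B *\<^sub>v u k \<and> y k = \<phi> ((C *\<^sub>v x k + D *\<^sub>v u k) $ 0)"
    unfolding wiener_traj_def using dims by auto
  define xbar where "xbar k = vec_lincomb n c {..<M} (\<lambda>j. x (k + j))" for k
  have inv_phi: "inv_into UNIV \<phi> (\<phi> r) = r" for r
    using phi_bij by (simp add: bij_betw_def)
  show ?thesis unfolding wiener_traj_def
  proof (intro bexI[of _ "xbar 0"] exI[of _ xbar] conjI allI impI)
    show "xbar k \<in> carrier_vec (dim_row A)" for k using dims by (simp add: xbar_def)
    fix k assume k: "k < L"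
    have window: "k + j < N" if "j \<in> {..<M}" for j using that k windows by simp
    have x_win: "\<forall>j\<in>{..<M}. x (k + j) \<in> carrier_vec n" and u_win: "\<forall>j\<in>{..<M}. u (k + j) \<in> carrier_vec m"
      using x_dim u_dim window by (auto intro: less_imp_le)
    have "xbar (Suc k) = vec_lincomb n c {..<M} (\<lambda>j. A *\<^sub>v x (k + j) + B *\<^sub>v u (k + j))"
      unfolding xbar_def using step window by (intro vec_lincomb_cong) simp
    then show "xbar (Suc k) = A *\<^sub>v xbar k + B *\<^sub>v ubar k"
      using vec_lincomb_affine_map[OF dims(1,2) x_win u_win] ubar k by (simp add: xbar_def)
    have y_win: "\<forall>j\<in>{..<M}. y (k + j) \<in> carrier_vec p"
      using step window phi_bij by (metis bij_betw_apply UNIV_I)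
    have "(C *\<^sub>v xbar k + D *\<^sub>v ubar k) $ 0
        = vec_lincomb 1 c {..<M} (\<lambda>j. C *\<^sub>v x (k + j) + D *\<^sub>v u (k + j)) $ 0"
      using vec_lincomb_affine_map[OF dims(3,4) x_win u_win] ubar k by (simp add: xbar_def)
    also have "\<dots> = (\<Sum>j<M. c j * inv_into UNIV \<phi> (y (k + j)))"
      using step window by (auto simp: vec_lincomb_def inv_phi intro!: sum.cong)
    also have "\<dots> = inv_into UNIV \<phi> (ybar k)"
      using inv_into_eq_lincomb_of_features[OF phi_inv _ y_win, of "ybar k" c] ybar_dim features k
      by simp
    finally have "\<phi> ((C *\<^sub>v xbar k + D *\<^sub>v ubar k) $ 0) = \<phi> (inv_into UNIV \<phi> (ybar k))"
      by simp
    also have "\<dots> = ybar k"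
      using phi_bij ybar_dim k by (simp add: bij_betw_def f_inv_into_f)
    finally show "ybar k = \<phi> ((C *\<^sub>v xbar k + D *\<^sub>v ubar k) $ 0)" ..
  qed (use dims in \<open>auto simp: xbar_def\<close>)
qed

theorem proposition3:
  fixes A B C D :: "real mat" and n m p q N L :: nat
    and \<phi> :: "real \<Rightarrow> real vec" and \<phi>t :: "nat \<Rightarrow> real vec \<Rightarrow> real" and b :: "nat \<Rightarrow> real"
    and u y ubar ybar :: "nat \<Rightarrow> real vec" and \<alpha> :: "real vec"
  assumes dims: "A \<in> carrier_mat n n" "B \<in> carrier_mat n m"
      "C \<in> carrier_mat 1 n" "D \<in> carrier_mat 1 m"
    and ctrb: "controllable A B" and obsv: "observable A C"
    and phi_bij: "bij_betw \<phi> UNIV (carrier_vec p)"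
    and phi_inv: "\<forall>w \<in> carrier_vec p. inv_into UNIV \<phi> w = (\<Sum>i<q. b i * \<phi>t i w)"
    and L: "1 \<le> L" "L + n \<le> N"
    and u_dim: "\<forall>k<N. u k \<in> carrier_vec m"
    and traj: "wiener_traj A B C D \<phi> N u y"
    and pe: "persistently_exciting m (L + n) N u"
    and ubar_dim: "\<forall>k<L. ubar k \<in> carrier_vec m"
    and ybar_dim: "\<forall>k<L. ybar k \<in> carrier_vec p"
    and alpha: "\<alpha> \<in> carrier_vec (N - L + 1)"
    and eq: "(hankel m L N u @\<^sub>r hankel q L N (\<lambda>k. vec q (\<lambda>i. \<phi>t i (y k)))) *\<^sub>v \<alpha>
             = stack m L ubar @\<^sub>v stack q L (\<lambda>k. vec q (\<lambda>i. \<phi>t i (ybar k)))"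
  shows "wiener_traj A B C D \<phi> L ubar ybar"
proof -
  define z where "z y k = vec q (\<lambda>i. \<phi>t i (y k))" for y :: "nat \<Rightarrow> real vec" and k
  have "(hankel m L N u *\<^sub>v \<alpha>) @\<^sub>v (hankel q L N (z y) *\<^sub>v \<alpha>)
      = stack m L ubar @\<^sub>v stack q L (z ybar)"
    using eq unfolding z_def by (simp add: mat_mult_append[OF hankel_carrier hankel_carrier alpha])
  then have u_eq: "hankel m L N u *\<^sub>v \<alpha> = stack m L ubar"
    and z_eq: "hankel q L N (z y) *\<^sub>v \<alpha> = stack q L (z ybar)"
    using append_vec_eq[OF mult_mat_vec_carrier[OF hankel_carrier alpha] stack_carrier] by simp_all
  have "ubar k = vec_lincomb m (\<lambda>j. \<alpha> $ j) {..<N - L + 1} (\<lambda>j. u (k + j))" if "k < L" for k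
    using hankel_mult_vec_eq_stackD[OF u_eq alpha that] ubar_dim that by simp
  moreover have "\<phi>t i (ybar k) = (\<Sum>j<N - L + 1. \<alpha> $ j * \<phi>t i (y (k + j)))" if "k < L" "i < q" for k i
    using arg_cong[OF hankel_mult_vec_eq_stackD[OF z_eq alpha that(1)], of "\<lambda>v. v $ i"] that
    by (simp add: z_def)
  ultimately show ?thesis
    using L by (intro wiener_traj_lincomb_of_windows[OF dims phi_bij phi_inv _ u_dim traj ybar_dim,
        where M = "N - L + 1" and c = "\<lambda>j. \<alpha> $ j"]) auto
qed

end
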